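(* Let $\mathcal F\subset\mathcal F_X$ be a set of feasible environments. For each decision rule $p$ and each history $h$, $$\inf_{\mu\in\Delta(\mathcal F(h))}\frac{U_p(\mu,h)}{V(\mu,h)}=\inf_{F\in\mathcal F(h)}\frac{U_p(F,h)}{V(F,h)}.$$
   Context: Sequential search model. Fix a discount factor $\delta\in(0,1)$, a Borel set $X\subset\mathbb{R}_+$ with $0\in X$, and an outside option $x_0>0$. Let $\mathcal F_X$ be the set of Borel probability distributions on $X$ with finite mean ("environments"). A history is $h_t=(x_0,x_1,\dots,x_t)$, $t\ge0$, $x_i\in X$, with best-so-far alternative $y_t=\max\{x_0,\dots,x_t\}$. A decision rule $p$ assigns to each history $h$ a stopping probability $p(h)\in[0,1]$. Given an environment $F$ and a history $h_t$, future alternatives are i.i.d. with law $F$; at each round $s\ge t$ the individual stops with probability $p(h_s)$, and stopping at round $s$ yields $\delta^{s-t}y_s$ (never stopping yields $0$). $U_p(F,h)$ is the expected payoff and $V(F,h)=\sup_pU_p(F,h)$. A prior is a finitely supported probability distribution $\mu$ on $\mathcal F$; $\Delta(\mathcal F)$ is the set of priors, each $F\in\mathcal F$ identified with the point mass on it. An environment or prior is consistent with $h_t$ if the sequence $x_1,\dots,x_t$ occurs with positive probability under it; $\mathcal F(h)$ and $\Delta(\mathcal F(h))$ denote the sets of environments and priors consistent with $h$. For $\mu\in\Delta(\mathcal F(h))$, $U_p(\mu,h)=\sum_F\mu(F\mid h)U_p(F,h)$ where $\mu(\cdot\mid h)$ is the Bayesian posterior given $h$, and $V(\mu,h)=\sup_pU_p(\mu,h)$.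 *)

theory Defs
  imports "HOL-Probability.Probability"
begin

text \<open>Histories are represented by the list [x_1,...,x_t] of sampled alternatives;
  the outside option x_0 is a fixed parameter.\<close>

definition best :: "real \<Rightarrow> real list \<Rightarrow> real" where
  "best x0 xs = Max (insert x0 (set xs))"

definition environment :: "real set \<Rightarrow> real measure \<Rightarrow> bool" where
  "environment X F \<longleftrightarrow> prob_space F \<and> sets F = sets borel \<and> measure F X = 1
      \<and> integrable F (\<lambda>x. x)"

definition decision_rule :: "(real list \<Rightarrow> real) \<Rightarrow> bool" where
  "decision_rule p \<longleftrightarrow> (\<forall>h. 0 \<le> p h \<and> p h \<le> 1) \<and>
     (\<forall>h k. (\<lambda>\<omega>. p (h @ map \<omega> [0..<k])) \<in> borel_measurable (Pi\<^sub>M {..<k} (\<lambda>_. borel)))"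

text \<open>Expected payoff: stopping at round t+k (after k further i.i.d. draws) has probability
  prod_{j<k} (1 - p(h_{t+j})) * p(h_{t+k}) and yields delta^k y_{t+k}.\<close>
definition payoff :: "real \<Rightarrow> real \<Rightarrow> (real list \<Rightarrow> real) \<Rightarrow> real measure \<Rightarrow> real list \<Rightarrow> real" where
  "payoff \<delta> x0 p F h = enn2real (\<Sum>k. ennreal (\<delta> ^ k) *
     (\<integral>\<^sup>+ \<omega>. ennreal ((\<Prod>j<k. 1 - p (h @ map \<omega> [0..<j])) * p (h @ map \<omega> [0..<k])
                       * best x0 (h @ map \<omega> [0..<k])) \<partial>(Pi\<^sub>M {..<k} (\<lambda>_. F))))"

definition value_env :: "real \<Rightarrow> real \<Rightarrow> real measure \<Rightarrow> real list \<Rightarrow> real" where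
  "value_env \<delta> x0 F h = (SUP p\<in>Collect decision_rule. payoff \<delta> x0 p F h)"

definition likelihood :: "real measure \<Rightarrow> real list \<Rightarrow> real" where
  "likelihood F h = prod_list (map (\<lambda>x. measure F {x}) h)"

definition consistent_envs :: "real measure set \<Rightarrow> real list \<Rightarrow> real measure set" where
  "consistent_envs Fs h = {F \<in> Fs. likelihood F h > 0}"

definition priors_on :: "real measure set \<Rightarrow> real measure pmf set" where
  "priors_on S = {\<mu>. finite (set_pmf \<mu>) \<and> set_pmf \<mu> \<subseteq> S}"

definition posterior :: "real measure pmf \<Rightarrow> real list \<Rightarrow> real measure \<Rightarrow> real" where
  "posterior \<mu> h F = pmf \<mu> F * likelihood F h / (\<Sum>G\<in>set_pmf \<mu>. pmf \<mu> G * likelihood G h)"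

definition payoff_prior :: "real \<Rightarrow> real \<Rightarrow> (real list \<Rightarrow> real) \<Rightarrow> real measure pmf \<Rightarrow> real list \<Rightarrow> real" where
  "payoff_prior \<delta> x0 p \<mu> h = (\<Sum>F\<in>set_pmf \<mu>. posterior \<mu> h F * payoff \<delta> x0 p F h)"

definition value_prior :: "real \<Rightarrow> real \<Rightarrow> real measure pmf \<Rightarrow> real list \<Rightarrow> real" where
  "value_prior \<delta> x0 \<mu> h = (SUP p\<in>Collect decision_rule. payoff_prior \<delta> x0 p \<mu> h)"

end

theory Submission
  imports Defs
begin

text \<open>Bayesian updating makes \<open>U\<^sub>p(\<mu>,h)\<close> the posterior average of the \<open>U\<^sub>p(F,h)\<close>, while every
  rule earns against \<open>\<mu>\<close> at most the posterior average of the \<open>V(F,h)\<close>; so the ratio for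
  \<open>\<mu>\<close> dominates a ratio of two averages and hence the smallest ratio \<open>U\<^sub>p(F,h)/V(F,h)\<close>.
  Point masses give the reverse inequality. The ratios are genuine: \<open>V(F,h) \<ge> y\<^sub>t > 0\<close>
  because stopping at once is a rule, and \<open>V(F,h) < \<infinity>\<close> because every payoff is bounded by
  the discounted expected best-so-far alternative, which grows only linearly in the number of
  draws when \<open>F\<close> has a finite mean.\<close>

lemma summable_real_times_power:
  fixes d :: real
  assumes "0 < d" "d < 1"
  shows "summable (\<lambda>n. real n * d ^ n)"
proof -
  have "summable (\<lambda>n. diffs (\<lambda>_. 1::real) n * d ^ n)"
    by (rule termdiff_converges[of _ 1]) (use assms in auto)
  then have "summable (\<lambda>n. real (Suc n) * d ^ n)"
    by (simp add: diffs_def)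
  then show ?thesis
    by (rule summable_comparison_test'[of _ 0]) (use assms in auto)
qed

lemma stopping_weight_bounds:
  fixes q :: "nat \<Rightarrow> real"
  assumes "\<And>j. 0 \<le> q j \<and> q j \<le> 1"
  shows "0 \<le> (\<Prod>j<k. 1 - q j) * q k" "(\<Prod>j<k. 1 - q j) * q k \<le> 1"
proof -
  have "0 \<le> (\<Prod>j<k. 1 - q j)" "(\<Prod>j<k. 1 - q j) \<le> 1"
    using assms by (auto intro: prod_nonneg prod_le_1 simp: algebra_simps)
  then show "0 \<le> (\<Prod>j<k. 1 - q j) * q k" "(\<Prod>j<k. 1 - q j) * q k \<le> 1"
    using assms[of k] by (auto intro: mult_le_one)
qed

lemma nn_integral_PiM_component:
  assumes "\<And>i. i \<in> I \<Longrightarrow> prob_space (M i)" "i \<in> I" "f \<in> borel_measurable (M i)"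
  shows "(\<integral>\<^sup>+\<omega>. f (\<omega> i) \<partial>Pi\<^sub>M I M) = (\<integral>\<^sup>+x. f x \<partial>M i)"
proof -
  have "(\<integral>\<^sup>+\<omega>. f (\<omega> i) \<partial>Pi\<^sub>M I M) = (\<integral>\<^sup>+x. f x \<partial>distr (Pi\<^sub>M I M) (M i) (\<lambda>\<omega>. \<omega> i))"
    using assms by (intro nn_integral_distr[symmetric]) auto
  also have "\<dots> = (\<integral>\<^sup>+x. f x \<partial>M i)"
    using assms by (simp add: distr_PiM_component)
  finally show ?thesis .
qed

lemma best_ge: "x0 \<le> best x0 xs"
  unfolding best_def by (rule Max_ge) auto

lemma best_le_sum_list_abs:
  assumes "0 \<le> x0"
  shows "best x0 xs \<le> x0 + sum_list (map abs xs)"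
proof -
  have abs_sum_nonneg: "0 \<le> sum_list (map abs xs)"
    by (rule sum_list_nonneg) auto
  have "y \<le> sum_list (map abs xs)" if "y \<in> set xs" for y
    using that member_le_sum_list[of "\<bar>y\<bar>" "map abs xs"] by force
  then show ?thesis
    using assms abs_sum_nonneg unfolding best_def by force
qed

lemma nn_integral_best_le:
  assumes F: "prob_space F" "sets F = sets borel" "integrable F (\<lambda>x. x)" and "0 \<le> x0"
  shows "(\<integral>\<^sup>+\<omega>. ennreal (best x0 (h @ map \<omega> [0..<k])) \<partial>Pi\<^sub>M {..<k} (\<lambda>_. F))
     \<le> ennreal (x0 + sum_list (map abs h) + real k * (\<integral>x. \<bar>x\<bar> \<partial>F))"
proof -
  let ?P = "Pi\<^sub>M {..<k} (\<lambda>_. F)"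
  define c where "c = x0 + sum_list (map abs h)"
  have "0 \<le> c"
    unfolding c_def using \<open>0 \<le> x0\<close> by (intro add_nonneg_nonneg sum_list_nonneg) auto
  have abs_meas: "(\<lambda>x. ennreal \<bar>x\<bar>) \<in> borel_measurable F"
    unfolding measurable_cong_sets[OF F(2) refl] by simp
  have "(\<integral>\<^sup>+\<omega>. ennreal (best x0 (h @ map \<omega> [0..<k])) \<partial>?P)
      \<le> (\<integral>\<^sup>+\<omega>. ennreal c + (\<Sum>j<k. ennreal \<bar>\<omega> j\<bar>) \<partial>?P)"
  proof (rule nn_integral_mono)
    fix \<omega>
    have "best x0 (h @ map \<omega> [0..<k]) \<le> c + (\<Sum>j<k. \<bar>\<omega> j\<bar>)"
      using best_le_sum_list_abs[OF \<open>0 \<le> x0\<close>, of "h @ map \<omega> [0..<k]"]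
      by (simp add: c_def sum_set_upt_conv_sum_list_nat[symmetric] atLeast0LessThan)
    then have "ennreal (best x0 (h @ map \<omega> [0..<k])) \<le> ennreal (c + (\<Sum>j<k. \<bar>\<omega> j\<bar>))"
      by (rule ennreal_leI)
    also have "\<dots> = ennreal c + (\<Sum>j<k. ennreal \<bar>\<omega> j\<bar>)"
      using \<open>0 \<le> c\<close> by (simp add: sum_nonneg ennreal_plus[symmetric] del: ennreal_plus)
    finally show "ennreal (best x0 (h @ map \<omega> [0..<k])) \<le> ennreal c + (\<Sum>j<k. ennreal \<bar>\<omega> j\<bar>)" .
  qed
  also have "\<dots> = ennreal c + (\<Sum>j<k. \<integral>\<^sup>+\<omega>. ennreal \<bar>\<omega> j\<bar> \<partial>?P)"
    using F(1) abs_meas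
    by (simp add: nn_integral_add nn_integral_sum prob_space.emeasure_space_1 prob_space_PiM
        del: sum_ennreal)
  also have "\<dots> = ennreal c + k * (\<integral>\<^sup>+x. ennreal \<bar>x\<bar> \<partial>F)"
    using nn_integral_PiM_component[of "{..<k}" "\<lambda>_. F" _ "\<lambda>x. ennreal \<bar>x\<bar>"] F(1) abs_meas
    by simp
  also have "\<dots> = ennreal (c + real k * (\<integral>x. \<bar>x\<bar> \<partial>F))"
    using F \<open>0 \<le> c\<close>
    by (simp add: nn_integral_eq_integral ennreal_plus ennreal_mult ennreal_of_nat_eq_real_of_nat)
  finally show ?thesis
    unfolding c_def .
qed

lemma payoff_le_discounted_bound:
  assumes "decision_rule p" and F: "prob_space F" "sets F = sets borel" "integrable F (\<lambda>x. x)"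
    and "0 \<le> x0" "0 < \<delta>" "\<delta> < 1"
  shows "payoff \<delta> x0 p F h
    \<le> (\<Sum>k. \<delta> ^ k * (x0 + sum_list (map abs h) + real k * (\<integral>x. \<bar>x\<bar> \<partial>F)))"
proof -
  define c where "c = x0 + sum_list (map abs h)"
  define a where "a = (\<integral>x. \<bar>x\<bar> \<partial>F)"
  define b where "b k = \<delta> ^ k * (c + real k * a)" for k
  have c_nonneg: "0 \<le> c"
    unfolding c_def using \<open>0 \<le> x0\<close> by (intro add_nonneg_nonneg sum_list_nonneg) auto
  have a_nonneg: "0 \<le> a"
    unfolding a_def by (rule integral_nonneg_AE) simp
  have b_nonneg: "0 \<le> b k" for k
    unfolding b_def using \<open>0 < \<delta>\<close> c_nonneg a_nonneg by simp
  have "summable (\<lambda>k. c * \<delta> ^ k + a * (real k * \<delta> ^ k))"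
    using assms by (intro summable_add summable_mult summable_geometric summable_real_times_power) auto
  then have "summable b"
    unfolding b_def by (simp add: algebra_simps)
  have p01: "0 \<le> p xs \<and> p xs \<le> 1" for xs
    using \<open>decision_rule p\<close> unfolding decision_rule_def by auto
  have term_le: "ennreal (\<delta> ^ k) *
      (\<integral>\<^sup>+\<omega>. ennreal ((\<Prod>j<k. 1 - p (h @ map \<omega> [0..<j])) * p (h @ map \<omega> [0..<k])
                   * best x0 (h @ map \<omega> [0..<k])) \<partial>Pi\<^sub>M {..<k} (\<lambda>_. F))
    \<le> ennreal (b k)" for k
  proof -
    have "(\<Prod>j<k. 1 - p (h @ map \<omega> [0..<j])) * p (h @ map \<omega> [0..<k]) * best x0 (h @ map \<omega> [0..<k])
        \<le> best x0 (h @ map \<omega> [0..<k])" for \<omega>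
      using stopping_weight_bounds[of "\<lambda>j. p (h @ map \<omega> [0..<j])" k] p01
        order_trans[OF \<open>0 \<le> x0\<close> best_ge]
      by (simp add: mult_left_le_one_le)
    then have "ennreal (\<delta> ^ k) *
      (\<integral>\<^sup>+\<omega>. ennreal ((\<Prod>j<k. 1 - p (h @ map \<omega> [0..<j])) * p (h @ map \<omega> [0..<k])
                   * best x0 (h @ map \<omega> [0..<k])) \<partial>Pi\<^sub>M {..<k} (\<lambda>_. F))
      \<le> ennreal (\<delta> ^ k) * ennreal (c + real k * a)"
      unfolding c_def a_def
      by (intro mult_left_mono order_trans[OF nn_integral_mono nn_integral_best_le] ennreal_leI)
        (use F \<open>0 \<le> x0\<close> in auto)
    also have "\<dots> = ennreal (b k)"
      unfolding b_def using \<open>0 < \<delta>\<close> c_nonneg a_nonneg by (simp add: ennreal_mult)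
    finally show ?thesis .
  qed
  have "payoff \<delta> x0 p F h \<le> enn2real (\<Sum>k. ennreal (b k))"
    unfolding payoff_def
    using suminf_ennreal2[OF b_nonneg \<open>summable b\<close>]
    by (intro enn2real_mono suminf_le summableI term_le) auto
  also have "\<dots> = (\<Sum>k. b k)"
    using suminf_ennreal2[OF b_nonneg \<open>summable b\<close>] suminf_nonneg[OF \<open>summable b\<close> b_nonneg] by simp
  finally show ?thesis
    unfolding b_def c_def a_def .
qed

lemma payoff_nonneg: "0 \<le> payoff \<delta> x0 p F h"
  unfolding payoff_def by simp

lemma decision_rule_stop: "decision_rule (\<lambda>_. 1)"
  unfolding decision_rule_def by auto

lemma payoff_stop:
  assumes "0 \<le> x0"
  shows "payoff \<delta> x0 (\<lambda>_. 1) F h = best x0 h"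
proof -
  have "(\<Sum>k. ennreal (\<delta> ^ k) *
      (\<integral>\<^sup>+\<omega>. ennreal ((\<Prod>j<k. 1 - (1::real)) * 1 * best x0 (h @ map \<omega> [0..<k])) \<partial>Pi\<^sub>M {..<k} (\<lambda>_. F)))
    = ennreal (best x0 h)"
    by (subst suminf_finite[of "{0}"]) (auto simp: power_0_left PiM_empty nn_integral_count_space_finite)
  then show ?thesis
    unfolding payoff_def using order_trans[OF assms best_ge] by simp
qed

text \<open>Without this bound the real-valued \<open>SUP\<close> in \<^const>\<open>value_env\<close> would be a junk value.\<close>

lemma bdd_above_payoffs:
  assumes "environment X F" "0 \<le> x0" "0 < \<delta>" "\<delta> < 1"
  shows "bdd_above ((\<lambda>q. payoff \<delta> x0 q F h) ` Collect decision_rule)"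
  using payoff_le_discounted_bound assms unfolding environment_def
  by (intro bdd_aboveI2) auto

lemma payoff_le_value_env:
  assumes "environment X F" "0 \<le> x0" "0 < \<delta>" "\<delta> < 1" "decision_rule q"
  shows "payoff \<delta> x0 q F h \<le> value_env \<delta> x0 F h"
  unfolding value_env_def using assms by (intro cSUP_upper bdd_above_payoffs) auto

lemma best_le_value_env:
  assumes "environment X F" "0 \<le> x0" "0 < \<delta>" "\<delta> < 1"
  shows "best x0 h \<le> value_env \<delta> x0 F h"
  using payoff_le_value_env[OF assms decision_rule_stop] payoff_stop[OF assms(2)] by simp

lemma posterior_nonneg: "0 \<le> posterior \<mu> h F"
  unfolding posterior_def likelihood_def
  by (intro divide_nonneg_nonneg mult_nonneg_nonneg sum_nonneg prod_list_nonneg) auto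

lemma sum_posterior:
  assumes "finite (set_pmf \<mu>)" "\<And>F. F \<in> set_pmf \<mu> \<Longrightarrow> 0 < likelihood F h"
  shows "(\<Sum>F\<in>set_pmf \<mu>. posterior \<mu> h F) = 1"
proof -
  have "0 < (\<Sum>F\<in>set_pmf \<mu>. pmf \<mu> F * likelihood F h)"
    using assms set_pmf_not_empty by (intro sum_pos) (auto simp: pmf_positive)
  then show ?thesis
    unfolding posterior_def by (simp add: sum_divide_distrib[symmetric])
qed

lemma payoff_prior_return_pmf:
  assumes "0 < likelihood F h"
  shows "payoff_prior \<delta> x0 p (return_pmf F) h = payoff \<delta> x0 p F h"
  unfolding payoff_prior_def posterior_def using assms by simp

lemma value_prior_return_pmf:
  assumes "0 < likelihood F h"
  shows "value_prior \<delta> x0 (return_pmf F) h = value_env \<delta> x0 F h"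
  unfolding value_prior_def value_env_def using payoff_prior_return_pmf[OF assms] by simp

context
  fixes \<delta> x0 :: real and X :: "real set" and Fs :: "real measure set" and h :: "real list"
    and \<mu> :: "real measure pmf"
  assumes params: "0 \<le> x0" "0 < \<delta>" "\<delta> < 1"
    and envs: "\<forall>F\<in>Fs. environment X F"
    and prior: "\<mu> \<in> priors_on (consistent_envs Fs h)"
begin

lemma payoff_prior_le_posterior_mean_value:
  assumes "decision_rule q"
  shows "payoff_prior \<delta> x0 q \<mu> h \<le> (\<Sum>F\<in>set_pmf \<mu>. posterior \<mu> h F * value_env \<delta> x0 F h)"
  unfolding payoff_prior_def using prior envs params assms
  by (intro sum_mono mult_left_mono payoff_le_value_env posterior_nonneg)
    (auto simp: priors_on_def consistent_envs_def)

lemma value_prior_le_posterior_mean_value: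
  "value_prior \<delta> x0 \<mu> h \<le> (\<Sum>F\<in>set_pmf \<mu>. posterior \<mu> h F * value_env \<delta> x0 F h)"
  unfolding value_prior_def
  using decision_rule_stop payoff_prior_le_posterior_mean_value by (intro cSUP_least) auto

lemma best_le_value_prior: "best x0 h \<le> value_prior \<delta> x0 \<mu> h"
proof -
  have "(\<Sum>F\<in>set_pmf \<mu>. posterior \<mu> h F) = 1"
    using prior by (intro sum_posterior) (auto simp: priors_on_def consistent_envs_def)
  then have "best x0 h = payoff_prior \<delta> x0 (\<lambda>_. 1) \<mu> h"
    by (simp add: payoff_prior_def payoff_stop[OF params(1)] flip: sum_distrib_right)
  also have "\<dots> \<le> value_prior \<delta> x0 \<mu> h"
    unfolding value_prior_def using decision_rule_stop payoff_prior_le_posterior_mean_value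
    by (intro cSUP_upper bdd_aboveI2) auto
  finally show ?thesis .
qed


lemma INF_env_ratio_le_prior_ratio:
  assumes "0 < x0"
  shows "(INF F\<in>consistent_envs Fs h. payoff \<delta> x0 p F h / value_env \<delta> x0 F h)
    \<le> payoff_prior \<delta> x0 p \<mu> h / value_prior \<delta> x0 \<mu> h"
proof -
  let ?S = "consistent_envs Fs h"
  define m where "m = (INF F\<in>?S. payoff \<delta> x0 p F h / value_env \<delta> x0 F h)"
  have x0_le_best: "x0 \<le> best x0 h"
    by (rule best_ge)
  have value_env_pos: "0 < value_env \<delta> x0 F h" if "F \<in> ?S" for F
    using that envs best_le_value_env[OF _ params, of X F h] x0_le_best assms
    by (fastforce simp: consistent_envs_def)
  have "?S \<noteq> {}"
    using prior set_pmf_not_empty by (fastforce simp: priors_on_def)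
  then have "0 \<le> m"
    unfolding m_def using value_env_pos payoff_nonneg
    by (intro cINF_greatest) (auto intro: divide_nonneg_pos)
  have bdd: "bdd_below ((\<lambda>F. payoff \<delta> x0 p F h / value_env \<delta> x0 F h) ` ?S)"
    using value_env_pos payoff_nonneg by (intro bdd_belowI2[of _ 0]) (auto intro: divide_nonneg_pos)
  have m_le: "m * value_env \<delta> x0 F h \<le> payoff \<delta> x0 p F h" if "F \<in> ?S" for F
    using cINF_lower[OF bdd that] value_env_pos[OF that] unfolding m_def
    by (simp add: pos_le_divide_eq)
  have "m * value_prior \<delta> x0 \<mu> h
      \<le> m * (\<Sum>F\<in>set_pmf \<mu>. posterior \<mu> h F * value_env \<delta> x0 F h)"
    using \<open>0 \<le> m\<close> value_prior_le_posterior_mean_value by (rule mult_left_mono[rotated])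
  also have "\<dots> = (\<Sum>F\<in>set_pmf \<mu>. posterior \<mu> h F * (m * value_env \<delta> x0 F h))"
    by (simp add: sum_distrib_left algebra_simps)
  also have "\<dots> \<le> (\<Sum>F\<in>set_pmf \<mu>. posterior \<mu> h F * payoff \<delta> x0 p F h)"
    using prior m_le by (intro sum_mono mult_left_mono posterior_nonneg) (auto simp: priors_on_def)
  also have "\<dots> = payoff_prior \<delta> x0 p \<mu> h"
    unfolding payoff_prior_def ..
  finally show ?thesis
    using best_le_value_prior x0_le_best assms unfolding m_def by (simp add: le_divide_eq)
qed

end

lemma INF_eq_INF_of_embedding:
  fixes f :: "'a \<Rightarrow> 'c::conditionally_complete_linorder" and g :: "'b \<Rightarrow> 'c"
  assumes "e ` A \<subseteq> B" "\<And>x. x \<in> A \<Longrightarrow> g (e x) = f x"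
    and "\<And>y. y \<in> B \<Longrightarrow> (INF x\<in>A. f x) \<le> g y" and "B \<noteq> {} \<Longrightarrow> A \<noteq> {}"
  shows "(INF y\<in>B. g y) = (INF x\<in>A. f x)"
proof (cases "A = {}")
  case False
  have "bdd_below (g ` B)"
    using assms(3) by (intro bdd_belowI2)
  have "(INF y\<in>B. g y) \<le> g (e x)" if "x \<in> A" for x
    using that assms(1) by (intro cINF_lower[OF \<open>bdd_below (g ` B)\<close>]) auto
  then have "(INF y\<in>B. g y) \<le> (INF x\<in>A. f x)"
    using False assms(2) by (intro cINF_greatest) auto
  moreover have "(INF x\<in>A. f x) \<le> (INF y\<in>B. g y)"
    using False assms(1,3) by (intro cINF_greatest) auto
  ultimately show ?thesis
    by (rule antisym)
next
  case True
  with assms(4) have "B = {}"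
    by blast
  with True show ?thesis
    by simp
qed

theorem proposition1:
  fixes \<delta> x0 :: real and X :: "real set" and Fs :: "real measure set"
    and p :: "real list \<Rightarrow> real" and h :: "real list"
  assumes "0 < \<delta>" "\<delta> < 1"
    and "X \<in> sets borel" "X \<subseteq> {0..}" "0 \<in> X" "x0 > 0"
    and "\<forall>F\<in>Fs. environment X F"
    and "decision_rule p"
    and "set h \<subseteq> X"
  shows "(INF \<mu>\<in>priors_on (consistent_envs Fs h). payoff_prior \<delta> x0 p \<mu> h / value_prior \<delta> x0 \<mu> h)
       = (INF F\<in>consistent_envs Fs h. payoff \<delta> x0 p F h / value_env \<delta> x0 F h)"
proof (rule INF_eq_INF_of_embedding[where e = return_pmf])
  show "return_pmf ` consistent_envs Fs h \<subseteq> priors_on (consistent_envs Fs h)"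
    by (auto simp: priors_on_def)
  show "payoff_prior \<delta> x0 p (return_pmf F) h / value_prior \<delta> x0 (return_pmf F) h
      = payoff \<delta> x0 p F h / value_env \<delta> x0 F h" if "F \<in> consistent_envs Fs h" for F
    using that by (simp add: consistent_envs_def payoff_prior_return_pmf value_prior_return_pmf)
  show "(INF F\<in>consistent_envs Fs h. payoff \<delta> x0 p F h / value_env \<delta> x0 F h)
      \<le> payoff_prior \<delta> x0 p \<mu> h / value_prior \<delta> x0 \<mu> h"
    if "\<mu> \<in> priors_on (consistent_envs Fs h)" for \<mu>
    using assms that by (intro INF_env_ratio_le_prior_ratio) auto
  show "consistent_envs Fs h \<noteq> {}" if "priors_on (consistent_envs Fs h) \<noteq> {}"
    using that set_pmf_not_empty by (fastforce simp: priors_on_def)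
qed

end
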